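(* There exist absolute constants $c,c'>0$ such that the following holds. Let $G=(V,E)$ be an unweighted undirected graph, let $\ell\ge1$ be an integer, let $V=A_0\supseteq A_1\supseteq\cdots\supseteq A_{\ell-1}\supseteq A_\ell=\emptyset$ be arbitrary nested vertex sets, and let $H$ (with weights $\omega'$) be the Thorup–Zwick edge set defined in the context. Let $0<\epsilon<1/6$ with $1/\epsilon$ an integer. Then for every $i\in\{0,1,\dots,\ell-1\}$ and every pair $x,y\in V$ with $d_G(x,y)\le(1/\epsilon)^i$, at least one of the following holds: (1) (successful) $d_H(x,y)\le d_G(x,y)+c\cdot i\cdot(1/\epsilon)^{i-1}$; (2) (failing) $d_G(x,A_{i+1})\le c'\cdot(1/\epsilon)^i$. In particular, for $i=\ell-1$ (where $d_G(x,A_\ell)=\infty$) alternative (1) always holds.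
   Context: Thorup–Zwick construction: given nested sets $V=A_0\supseteq A_1\supseteq\cdots\supseteq A_\ell=\emptyset$, write $d_G(v,S)=\min_{s\in S}d_G(v,s)$ with $d_G(v,\emptyset)=\infty$. For $v\in V$ and $j$ with $A_j\neq\emptyset$, the pivot $p_j(v)$ is a vertex of $A_j$ closest to $v$ (ties broken consistently). For $0\le i\le\ell-1$ and $u\in A_i\setminus A_{i+1}$, the bunch is $B(u)=\{v\in A_i: d_G(u,v)<d_G(u,A_{i+1})\}\cup\{p_{i+1}(u)\}$ (the pivot term omitted if $A_{i+1}=\emptyset$; thus $B(u)=A_{\ell-1}$ for $u\in A_{\ell-1}$). The edge set is $H=\{(u,v):u\in V, v\in B(u)\}\cup\{(v,p_j(v)): v\in V,\ 1\le j\le \ell-1,\ A_j\neq\emptyset\}$, each edge $(u,v)$ having weight $\omega'(u,v)=d_G(u,v)$. $d_H$ denotes shortest-path distance in the weighted graph $(V,H,\omega')$. *)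

theory Defs
  imports Complex_Main "HOL-Library.Extended_Real"
begin

text \<open>Unweighted undirected graph: vertex set V :: nat set, edge relation E (symmetric, E \<subseteq> V \<times> V).
A walk is a nonempty list of vertices of V with consecutive vertices adjacent.\<close>

definition walk :: "nat set \<Rightarrow> (nat \<times> nat) set \<Rightarrow> nat list \<Rightarrow> bool" where
  "walk V E xs \<longleftrightarrow> xs \<noteq> [] \<and> set xs \<subseteq> V \<and>
     (\<forall>k. Suc k < length xs \<longrightarrow> (xs ! k, xs ! Suc k) \<in> E)"

definition gdist :: "nat set \<Rightarrow> (nat \<times> nat) set \<Rightarrow> nat \<Rightarrow> nat \<Rightarrow> enat" where
  "gdist V E u v = Inf {enat (length xs - 1) | xs. walk V E xs \<and> hd xs = u \<and> last xs = v}"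

definition setdist :: "nat set \<Rightarrow> (nat \<times> nat) set \<Rightarrow> nat \<Rightarrow> nat set \<Rightarrow> enat" where
  "setdist V E v S = (INF s\<in>S. gdist V E v s)"

definition is_pivot :: "nat set \<Rightarrow> (nat \<times> nat) set \<Rightarrow> (nat \<Rightarrow> nat set) \<Rightarrow> nat \<Rightarrow> (nat \<Rightarrow> nat \<Rightarrow> nat) \<Rightarrow> bool" where
  "is_pivot V E A l p \<longleftrightarrow> (\<forall>v\<in>V. \<forall>j\<le>l. A j \<noteq> {} \<longrightarrow>
      p j v \<in> A j \<and> gdist V E v (p j v) = setdist V E v (A j))"

text \<open>Bunch of u at level i (used for u \<in> A i - A (i+1)).\<close>
definition bunch :: "nat set \<Rightarrow> (nat \<times> nat) set \<Rightarrow> (nat \<Rightarrow> nat set) \<Rightarrow> (nat \<Rightarrow> nat \<Rightarrow> nat) \<Rightarrow> nat \<Rightarrow> nat \<Rightarrow> nat set" where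
  "bunch V E A p i u = {v \<in> A i. gdist V E u v < setdist V E u (A (Suc i))}
      \<union> (if A (Suc i) = {} then {} else {p (Suc i) u})"

definition TZ_edges :: "nat set \<Rightarrow> (nat \<times> nat) set \<Rightarrow> (nat \<Rightarrow> nat set) \<Rightarrow> nat \<Rightarrow> (nat \<Rightarrow> nat \<Rightarrow> nat) \<Rightarrow> (nat \<times> nat) set" where
  "TZ_edges V E A l p =
     {(u, v). \<exists>i<l. u \<in> A i - A (Suc i) \<and> v \<in> bunch V E A p i u}
     \<union> {(v, p j v) | v j. v \<in> V \<and> 1 \<le> j \<and> j \<le> l - 1 \<and> A j \<noteq> {}}"

definition wdist :: "(nat \<times> nat) set \<Rightarrow> (nat \<Rightarrow> nat \<Rightarrow> enat) \<Rightarrow> nat \<Rightarrow> nat \<Rightarrow> enat" where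
  "wdist H w u v = Inf {(\<Sum>k<length xs - 1. w (xs ! k) (xs ! Suc k)) | xs.
      xs \<noteq> [] \<and> hd xs = u \<and> last xs = v \<and>
      (\<forall>k. Suc k < length xs \<longrightarrow> (xs ! k, xs ! Suc k) \<in> H \<union> H\<inverse>)}"

end

theory Submission
  imports Defs
begin

text \<open>Induction on the level \<open>i\<close>, with distance scale \<open>L = (1/\<epsilon>)\<^sup>i\<close>. A shortest
  \<open>x\<close>-\<open>y\<close> path at scale \<open>D\<cdot>L\<close> (\<open>D = 1/\<epsilon>\<close>) is cut into \<open>D\<close> pieces of length at most \<open>L\<close>.
  If level \<open>i\<close> succeeds on every piece, the additive errors simply add up. Otherwise let \<open>a\<close> be
  the first endpoint of the first failing piece and \<open>b\<close> the last endpoint of the last one: both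
  are within \<open>4L\<close> of \<open>A\<^sub>i\<^sub>+\<^sub>1\<close>. Unless \<open>x\<close> itself is within \<open>4DL\<close> of \<open>A\<^sub>i\<^sub>+\<^sub>2\<close>, the pivot
  \<open>a'\<close> of \<open>a\<close> lies outside \<open>A\<^sub>i\<^sub>+\<^sub>2\<close> and the pivot \<open>b'\<close> of \<open>b\<close> lies in the bunch of \<open>a'\<close>, so
  the path \<open>a, a', b', b\<close> in \<open>H\<close> bridges all failing pieces at an extra cost of \<open>16L\<close>.\<close>

lemma walk_singleton [simp]: "walk V E [x] \<longleftrightarrow> x \<in> V"
  by (simp add: walk_def)

lemma walk_Cons_Cons [simp]:
  "walk V E (x # y # zs) \<longleftrightarrow> x \<in> V \<and> (x, y) \<in> E \<and> walk V E (y # zs)"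
proof
  assume w: "walk V E (x # y # zs)"
  have "((y # zs) ! k, (y # zs) ! Suc k) \<in> E" if "Suc k < length (y # zs)" for k
    using w that unfolding walk_def by (metis Suc_less_eq length_Cons nth_Cons_Suc)
  with w show "x \<in> V \<and> (x, y) \<in> E \<and> walk V E (y # zs)"
    unfolding walk_def by fastforce
next
  assume "x \<in> V \<and> (x, y) \<in> E \<and> walk V E (y # zs)"
  then show "walk V E (x # y # zs)"
    unfolding walk_def by (auto simp: less_Suc_eq_0_disj)
qed

lemma walk_append:
  "walk V E xs \<Longrightarrow> walk V E ys \<Longrightarrow> last xs = hd ys \<Longrightarrow> walk V E (xs @ tl ys)"
proof (induction xs rule: induct_list012)
  case (2 x)
  then show ?case by (cases ys) (auto simp: walk_def)
next
  case (3 x y zs)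
  then show ?case by simp
qed (simp add: walk_def)

lemma walk_rev: "sym E \<Longrightarrow> walk V E xs \<Longrightarrow> walk V E (rev xs)"
proof (induction xs rule: induct_list012)
  case (3 x y zs)
  have "walk V E (rev (y # zs))" "walk V E [y, x]"
    using 3 by (simp, cases zs) (auto dest: symD)
  from walk_append[OF this] show ?case by simp
qed auto

lemma walk_drop_take:
  assumes "walk V E xs" "j \<le> k" "k < length xs"
  shows "walk V E (drop j (take (Suc k) xs))"
  using assms unfolding walk_def
  by (auto simp: min_def dest: in_set_dropD in_set_takeD)

lemma gdist_le_walk:
  "walk V E xs \<Longrightarrow> hd xs = u \<Longrightarrow> last xs = v \<Longrightarrow> gdist V E u v \<le> enat (length xs - 1)"
  unfolding gdist_def by (rule Inf_lower) blast

lemma gdist_attained: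
  assumes "gdist V E u v \<noteq> \<infinity>"
  obtains xs where "walk V E xs" "hd xs = u" "last xs = v" "gdist V E u v = enat (length xs - 1)"
proof -
  let ?S = "{enat (length xs - 1) | xs. walk V E xs \<and> hd xs = u \<and> last xs = v}"
  have "?S \<noteq> {}"
    using assms unfolding gdist_def by (auto simp: top_enat_def[symmetric])
  then have "Inf ?S \<in> ?S"
    by (meson ex_in_conv wellorder_InfI)
  then show thesis
    using that unfolding gdist_def by blast
qed

lemma gdist_self: "u \<in> V \<Longrightarrow> gdist V E u u = 0"
  using gdist_le_walk[of V E "[u]" u u] by (simp add: zero_enat_def[symmetric])

lemma gdist_triangle: "gdist V E u w \<le> gdist V E u v + gdist V E v w"
proof (cases "gdist V E u v = \<infinity> \<or> gdist V E v w = \<infinity>")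
  case False
  then obtain xs ys
    where xs: "walk V E xs" "hd xs = u" "last xs = v" "gdist V E u v = enat (length xs - 1)"
      and ys: "walk V E ys" "hd ys = v" "last ys = w" "gdist V E v w = enat (length ys - 1)"
    by (metis gdist_attained)
  have ne: "xs \<noteq> []" "ys \<noteq> []"
    using xs ys by (auto simp: walk_def)
  have "gdist V E u w \<le> enat (length (xs @ tl ys) - 1)"
  proof (rule gdist_le_walk)
    show "walk V E (xs @ tl ys)"
      using xs ys by (simp add: walk_append)
    show "last (xs @ tl ys) = w"
      using xs ys ne by (cases ys) (auto simp: last_append)
  qed (use xs ne in simp)
  also have "\<dots> = gdist V E u v + gdist V E v w"
    using xs ys ne by (cases xs; cases ys) simp_all
  finally show ?thesis .
qed auto

lemma gdist_commute:
  assumes "sym E"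
  shows "gdist V E u v = gdist V E v u"
proof -
  have "gdist V E u v \<le> gdist V E v u" for u v
  proof (cases "gdist V E v u = \<infinity>")
    case False
    then obtain xs where xs: "walk V E xs" "hd xs = v" "last xs = u" "gdist V E v u = enat (length xs - 1)"
      by (metis gdist_attained)
    then have "xs \<noteq> []"
      by (auto simp: walk_def)
    then have "gdist V E u v \<le> enat (length (rev xs) - 1)"
      using xs assms by (intro gdist_le_walk) (auto simp: walk_rev hd_rev last_rev)
    then show ?thesis
      using xs by simp
  qed simp
  then show ?thesis
    by (metis antisym)
qed

lemma gdist_walk_nth:
  assumes "walk V E xs" "j \<le> k" "k < length xs"
  shows "gdist V E (xs ! j) (xs ! k) \<le> enat (k - j)"
proof -
  let ?ys = "drop j (take (Suc k) xs)"
  have "gdist V E (hd ?ys) (last ?ys) \<le> enat (length ?ys - 1)"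
    using walk_drop_take[OF assms] by (rule gdist_le_walk) auto
  moreover have "last ?ys = xs ! k"
    using assms by (simp add: take_Suc_conv_app_nth)
  ultimately show ?thesis
    using assms by (simp add: hd_drop_conv_nth)
qed

lemma shortest_walk_milestones:
  assumes "gdist V E x y = enat n" "n \<le> D * L"
  obtains s q where "s 0 = x" "s D = y" "\<And>k. s k \<in> V"
    "mono q" "q 0 = 0" "q D = n" "\<And>k. q (Suc k) - q k \<le> L"
    "\<And>j k. j \<le> k \<Longrightarrow> gdist V E (s j) (s k) \<le> enat (q k - q j)"
proof -
  obtain xs where xs: "walk V E xs" "hd xs = x" "last xs = y" "gdist V E x y = enat (length xs - 1)"
    by (rule gdist_attained[of V E x y]) (use assms in auto)
  have ne: "xs \<noteq> []"
    using xs by (simp add: walk_def)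
  define q where "q k = min (k * L) n" for k
  have q_mono: "mono q"
    unfolding mono_def q_def by (simp add: min.coboundedI1 mult_le_mono1)
  have q_less: "q k < length xs" for k
    using xs ne assms(1) unfolding q_def by (cases xs) auto
  show thesis
  proof (rule that[of "\<lambda>k. xs ! q k" q])
    show "xs ! q 0 = x" "xs ! q D = y"
      using xs ne assms by (simp_all add: q_def hd_conv_nth last_conv_nth mult.commute)
    show "xs ! q k \<in> V" for k
      using xs q_less unfolding walk_def by (meson nth_mem subsetD)
    show "q 0 = 0" "q D = n" "q (Suc k) - q k \<le> L" for k
      using assms xs(4) by (auto simp: q_def mult.commute)
    show "gdist V E (xs ! q j) (xs ! q k) \<le> enat (q k - q j)" if "j \<le> k" for j k
      using gdist_walk_nth[OF xs(1)] q_mono q_less that by (simp add: monoD)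
  qed (fact q_mono)
qed

lemma setdist_le: "s \<in> S \<Longrightarrow> setdist V E v S \<le> gdist V E v s"
  unfolding setdist_def by (rule INF_lower)

lemma setdist_empty [simp]: "setdist V E v {} = \<infinity>"
  by (simp add: setdist_def top_enat_def)

lemma setdist_triangle: "setdist V E u S \<le> gdist V E u v + setdist V E v S"
proof (cases "S = {}")
  case False
  then have "setdist V E v S \<in> gdist V E v ` S"
    unfolding setdist_def by (meson ex_in_conv imageI wellorder_InfI)
  then obtain s where "s \<in> S" "setdist V E v S = gdist V E v s"
    by blast
  then show ?thesis
    using setdist_le gdist_triangle order_trans by metis
qed simp

lemma setdist_gt_near:
  assumes "gdist V E x a \<le> enat t" "enat (t + m) < setdist V E x S"
  shows "enat m < setdist V E a S"
proof -
  have "enat t + enat m < setdist V E x S"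
    using assms(2) by simp
  also have "\<dots> \<le> gdist V E x a + setdist V E a S"
    by (rule setdist_triangle)
  also have "\<dots> \<le> enat t + setdist V E a S"
    using assms(1) by (rule add_right_mono)
  finally show ?thesis
    unfolding enat_add_left_cancel_less by simp
qed

inductive wpath :: "(nat \<times> nat) set \<Rightarrow> (nat \<Rightarrow> nat \<Rightarrow> enat) \<Rightarrow> nat \<Rightarrow> nat \<Rightarrow> enat \<Rightarrow> bool"
  for H w where
  wpath_refl: "wpath H w u u 0"
| wpath_step: "(u, v) \<in> H \<union> H\<inverse> \<Longrightarrow> wpath H w v z c \<Longrightarrow> wpath H w u z (w u v + c)"

lemma wpath_trans: "wpath H w u v c \<Longrightarrow> wpath H w v z c' \<Longrightarrow> wpath H w u z (c + c')"
  by (induction rule: wpath.induct) (auto simp: add.assoc intro: wpath.intros)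

lemma wpath_rev:
  assumes "\<And>a b. w a b = w b a"
  shows "wpath H w u v c \<Longrightarrow> wpath H w v u c"
proof (induction rule: wpath.induct)
  case (wpath_step u v z c)
  have "wpath H w v u (w v u + 0)"
    using wpath_step(1) by (blast intro: wpath.intros)
  from wpath_trans[OF wpath_step(3) this] show ?case
    using assms by (simp add: add.commute)
qed (rule wpath_refl)

lemma path_weight_Cons:
  "xs \<noteq> [] \<Longrightarrow> (\<Sum>k<length (u # xs) - 1. w ((u # xs) ! k) ((u # xs) ! Suc k)) =
    w u (hd xs) + (\<Sum>k<length xs - 1. w (xs ! k) (xs ! Suc k))"
  by (cases xs) (simp_all del: sum.lessThan_Suc add: sum.lessThan_Suc_shift)

lemma wpath_of_list:
  "xs \<noteq> [] \<Longrightarrow> \<forall>k. Suc k < length xs \<longrightarrow> (xs ! k, xs ! Suc k) \<in> H \<union> H\<inverse> \<Longrightarrow>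
    wpath H w (hd xs) (last xs) (\<Sum>k<length xs - 1. w (xs ! k) (xs ! Suc k))"
proof (induction xs rule: induct_list012)
  case (3 x y zs)
  have "wpath H w (hd (y # zs)) (last (y # zs)) (\<Sum>k<length zs. w ((y # zs) ! k) ((y # zs) ! Suc k))"
    using 3 by fastforce
  moreover have "(x, y) \<in> H \<union> H\<inverse>"
    using "3.prems"(2) by fastforce
  ultimately show ?case
    using path_weight_Cons[where xs = "y # zs" and u = x and w = w] by (simp del: sum.lessThan_Suc add: wpath_step)
qed (auto intro: wpath_refl)

lemma list_of_wpath:
  "wpath H w u v c \<Longrightarrow> \<exists>xs. xs \<noteq> [] \<and> hd xs = u \<and> last xs = v \<and>
      (\<forall>k. Suc k < length xs \<longrightarrow> (xs ! k, xs ! Suc k) \<in> H \<union> H\<inverse>) \<and>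
      (\<Sum>k<length xs - 1. w (xs ! k) (xs ! Suc k)) = c"
proof (induction rule: wpath.induct)
  case (wpath_refl u)
  show ?case
    by (intro exI[of _ "[u]"]) simp
next
  case (wpath_step u v z c)
  then obtain xs where xs: "xs \<noteq> []" "hd xs = v" "last xs = z"
    "\<forall>k. Suc k < length xs \<longrightarrow> (xs ! k, xs ! Suc k) \<in> H \<union> H\<inverse>"
    "(\<Sum>k<length xs - 1. w (xs ! k) (xs ! Suc k)) = c"
    by blast
  moreover have "\<forall>k. Suc k < length (u # xs) \<longrightarrow> ((u # xs) ! k, (u # xs) ! Suc k) \<in> H \<union> H\<inverse>"
  proof (intro allI impI)
    fix k assume "Suc k < length (u # xs)"
    then show "((u # xs) ! k, (u # xs) ! Suc k) \<in> H \<union> H\<inverse>"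
      using xs wpath_step(1) by (cases k) (auto simp: hd_conv_nth)
  qed
  ultimately show ?case
    using path_weight_Cons[where xs = xs and u = u and w = w] by (intro exI[of _ "u # xs"]) simp
qed

lemma wdist_eq_Inf_wpath: "wdist H w u v = Inf {c. wpath H w u v c}"
proof -
  have "{(\<Sum>k<length xs - 1. w (xs ! k) (xs ! Suc k)) | xs. xs \<noteq> [] \<and> hd xs = u \<and> last xs = v \<and>
      (\<forall>k. Suc k < length xs \<longrightarrow> (xs ! k, xs ! Suc k) \<in> H \<union> H\<inverse>)} = {c. wpath H w u v c}"
    using wpath_of_list list_of_wpath by fastforce
  then show ?thesis
    unfolding wdist_def by simp
qed

lemma wdist_le_wpath: "wpath H w u v c \<Longrightarrow> wdist H w u v \<le> c"
  unfolding wdist_eq_Inf_wpath by (rule Inf_lower) simp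

lemma wdist_self: "wdist H w u u = 0"
  using wdist_le_wpath[OF wpath_refl] by simp

lemma wdist_edge: "(u, v) \<in> H \<union> H\<inverse> \<Longrightarrow> wdist H w u v \<le> w u v"
  using wdist_le_wpath[OF wpath_step[OF _ wpath_refl]] by simp

lemma wpath_wdist:
  assumes "wdist H w u v \<noteq> \<infinity>"
  shows "wpath H w u v (wdist H w u v)"
proof -
  have "{c. wpath H w u v c} \<noteq> {}"
    using assms unfolding wdist_eq_Inf_wpath by (auto simp: top_enat_def[symmetric])
  then show ?thesis
    unfolding wdist_eq_Inf_wpath by (meson ex_in_conv mem_Collect_eq wellorder_InfI)
qed

lemma wdist_triangle: "wdist H w u z \<le> wdist H w u v + wdist H w v z"
proof (cases "wdist H w u v = \<infinity> \<or> wdist H w v z = \<infinity>")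
  case False
  then show ?thesis
    using wdist_le_wpath[OF wpath_trans[OF wpath_wdist wpath_wdist]] by simp
qed auto

lemma wdist_triangle3: "wdist H w u z \<le> wdist H w u v + wdist H w v v' + wdist H w v' z"
proof -
  have "wdist H w u z \<le> wdist H w u v' + wdist H w v' z"
    by (rule wdist_triangle)
  also have "\<dots> \<le> wdist H w u v + wdist H w v v' + wdist H w v' z"
    by (intro add_right_mono wdist_triangle)
  finally show ?thesis .
qed

lemma wdist_commute:
  assumes "\<And>a b. w a b = w b a"
  shows "wdist H w u v = wdist H w v u"
proof -
  have "{c. wpath H w u v c} = {c. wpath H w v u c}"
    using wpath_rev[of w H u v] wpath_rev[of w H v u] assms by blast
  then show ?thesis
    unfolding wdist_eq_Inf_wpath by simp
qed

lemma wdist_chain: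
  assumes "mono q" "j \<le> k"
    and "\<And>t. j \<le> t \<Longrightarrow> t < k \<Longrightarrow> wdist H w (s t) (s (Suc t)) \<le> enat (q (Suc t) - q t + e)"
  shows "wdist H w (s j) (s k) \<le> enat (q k - q j + (k - j) * e)"
  using assms(2,3)
proof (induction k rule: dec_induct)
  case base
  then show ?case
    by (simp add: wdist_self)
next
  case (step k)
  have "wdist H w (s j) (s (Suc k)) \<le> wdist H w (s j) (s k) + wdist H w (s k) (s (Suc k))"
    by (rule wdist_triangle)
  also have "\<dots> \<le> enat (q k - q j + (k - j) * e) + enat (q (Suc k) - q k + e)"
    using step by (intro add_mono) auto
  also have "\<dots> = enat (q (Suc k) - q j + (Suc k - j) * e)"
  proof -
    have "q j \<le> q k" "q k \<le> q (Suc k)"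
      using step(1) monoD[OF assms(1)] by simp_all
    then show ?thesis
      using step(1) by (simp add: Suc_diff_le)
  qed
  finally show ?case .
qed

lemma first_last_failure:
  fixes D :: nat
  assumes "\<not> (\<forall>t<D. P t)"
  obtains k1 k2 where "k1 \<le> k2" "k2 < D" "\<not> P k1" "\<not> P k2"
    "\<And>t. t < k1 \<or> k2 < t \<and> t < D \<Longrightarrow> P t"
proof -
  define B where "B = {t. t < D \<and> \<not> P t}"
  have B: "finite B" "B \<noteq> {}"
    using assms unfolding B_def by auto
  show thesis
  proof (rule that[of "Min B" "Max B"])
    show "Min B \<le> Max B" "Max B < D" "\<not> P (Min B)" "\<not> P (Max B)"
      using Min_in[OF B] Max_in[OF B] B unfolding B_def by auto
    show "P t" if "t < Min B \<or> Max B < t \<and> t < D" for t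
    proof (rule ccontr)
      assume "\<not> P t"
      moreover have "t < D"
        using that Min_in[OF B] unfolding B_def by auto
      ultimately have "t \<in> B"
        unfolding B_def by simp
      then show False
        using that Min_le[OF B(1)] Max_ge[OF B(1)] by fastforce
    qed
  qed
qed

lemma wdist_chain_bridged:
  assumes "mono q"
    and good: "\<And>t. t < D \<Longrightarrow> good t \<Longrightarrow>
      wdist H w (s t) (s (Suc t)) \<le> enat (q (Suc t) - q t + e)"
    and bridge: "\<And>j k. j \<le> k \<Longrightarrow> k < D \<Longrightarrow> \<not> good j \<Longrightarrow> \<not> good k \<Longrightarrow>
      wdist H w (s j) (s (Suc k)) \<le> enat (q (Suc k) - q j + r)"
  shows "wdist H w (s 0) (s D) \<le> enat (q D - q 0 + D * e + r)"
proof (cases "\<forall>t<D. good t")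
  case True
  then have "wdist H w (s 0) (s D) \<le> enat (q D - q 0 + (D - 0) * e)"
    using good by (intro wdist_chain[OF assms(1)]) auto
  then show ?thesis
    by (simp add: order_trans)
next
  case False
  then obtain k1 k2 where k: "k1 \<le> k2" "k2 < D" "\<not> good k1" "\<not> good k2"
    and segment: "\<And>t. t < k1 \<or> k2 < t \<and> t < D \<Longrightarrow> good t"
    by (rule first_last_failure) blast
  have "wdist H w (s 0) (s D) \<le>
      wdist H w (s 0) (s k1) + wdist H w (s k1) (s (Suc k2)) + wdist H w (s (Suc k2)) (s D)"
    by (rule wdist_triangle3)
  also have "\<dots> \<le> enat (q k1 - q 0 + (k1 - 0) * e) + enat (q (Suc k2) - q k1 + r)
      + enat (q D - q (Suc k2) + (D - Suc k2) * e)"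
    using k segment by (intro add_mono wdist_chain[OF assms(1)] good bridge) auto
  also have "\<dots> \<le> enat (q D - q 0 + D * e + r)"
  proof -
    have "q 0 \<le> q k1" "q k1 \<le> q (Suc k2)" "q (Suc k2) \<le> q D"
      using k monoD[OF assms(1)] by simp_all
    moreover have "(k1 + (D - Suc k2)) * e \<le> D * e"
      using k by (intro mult_le_mono1) simp
    then have "k1 * e + (D - Suc k2) * e \<le> D * e"
      by (simp only: add_mult_distrib)
    ultimately show ?thesis
      by simp
  qed
  finally show ?thesis .
qed

locale thorup_zwick =
  fixes V :: "nat set" and E :: "(nat \<times> nat) set" and l :: nat
    and A :: "nat \<Rightarrow> nat set" and p :: "nat \<Rightarrow> nat \<Rightarrow> nat"
  assumes sym_E: "sym E" and A_0: "A 0 = V" and A_decreasing: "\<forall>j<l. A (Suc j) \<subseteq> A j"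
    and pivot: "is_pivot V E A l p"
begin

abbreviation dG :: "nat \<Rightarrow> nat \<Rightarrow> enat" where
  "dG \<equiv> gdist V E"

abbreviation dH :: "nat \<Rightarrow> nat \<Rightarrow> enat" where
  "dH \<equiv> wdist (TZ_edges V E A l p) (gdist V E)"

lemma A_subset_V: "j \<le> l \<Longrightarrow> A j \<subseteq> V"
proof (induction j)
  case (Suc j)
  then show ?case
    using A_decreasing by (meson Suc_le_lessD less_imp_le_nat order_trans)
qed (simp add: A_0)

lemma dH_commute: "dH u v = dH v u"
  by (rule wdist_commute) (rule gdist_commute[OF sym_E])

lemma pivot_close:
  assumes "v \<in> V" "j \<le> l" "setdist V E v (A j) \<le> enat m"
  shows "A j \<noteq> {}" "p j v \<in> A j" "dG v (p j v) \<le> enat m"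
proof -
  show ne: "A j \<noteq> {}"
    using assms(3) by auto
  show "p j v \<in> A j" "dG v (p j v) \<le> enat m"
    using pivot assms ne unfolding is_pivot_def by auto
qed

lemma dH_pivot: "v \<in> V \<Longrightarrow> 0 < j \<Longrightarrow> j < l \<Longrightarrow> A j \<noteq> {} \<Longrightarrow> dH v (p j v) \<le> dG v (p j v)"
  by (rule wdist_edge) (auto simp: TZ_edges_def)

lemma dH_bunch:
  assumes "i < l" "u \<in> A i" "v \<in> A i" "dG u v < setdist V E u (A (Suc i))"
  shows "dH u v \<le> dG u v"
proof (rule wdist_edge)
  have "u \<in> V"
    using A_subset_V[of i] assms(1,2) by auto
  then have "u \<notin> A (Suc i)"
    using assms(4) setdist_le[of u "A (Suc i)" V E u] by (auto simp: gdist_self)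
  then show "(u, v) \<in> TZ_edges V E A l p \<union> (TZ_edges V E A l p)\<inverse>"
    using assms unfolding TZ_edges_def bunch_def by blast
qed

lemma pivot_detour:
  assumes "Suc i < l" "a \<in> V" "b \<in> V"
    and near: "setdist V E a (A (Suc i)) \<le> enat r" "setdist V E b (A (Suc i)) \<le> enat r"
    and "dG a b \<le> enat m" and far: "enat (3 * r + m) < setdist V E a (A (Suc (Suc i)))"
  shows "dH a b \<le> enat (4 * r + m)"
proof -
  define a' b' where "a' = p (Suc i) a" and "b' = p (Suc i) b"
  have a': "A (Suc i) \<noteq> {}" "a' \<in> A (Suc i)" "dG a a' \<le> enat r"
    using pivot_close[OF assms(2) _ near(1)] assms(1) unfolding a'_def by auto
  have b': "b' \<in> A (Suc i)" "dG b b' \<le> enat r"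
    using pivot_close[OF assms(3) _ near(2)] assms(1) unfolding b'_def by auto
  have "dG a' b' \<le> dG a' b + dG b b'"
    by (rule gdist_triangle)
  also have "\<dots> \<le> dG a' a + dG a b + dG b b'"
    by (intro add_right_mono gdist_triangle)
  also have "\<dots> \<le> enat r + enat m + enat r"
    using a' b' assms(6) gdist_commute[OF sym_E, where u = a' and v = a] by (intro add_mono) simp_all
  finally have a'b': "dG a' b' \<le> enat (2 * r + m)"
    by (simp add: mult_2 add.commute add.left_commute)
  have "enat (r + (2 * r + m)) < setdist V E a (A (Suc (Suc i)))"
    using far by simp
  with a'(3) have "enat (2 * r + m) < setdist V E a' (A (Suc (Suc i)))"
    by (rule setdist_gt_near)
  then have "dG a' b' < setdist V E a' (A (Suc (Suc i)))"
    using a'b' by (rule le_less_trans[rotated])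
  then have "dH a' b' \<le> dG a' b'"
    using assms(1) a'(2) b'(1) by (intro dH_bunch) auto
  moreover have "dH a a' \<le> enat r"
    using dH_pivot[of a "Suc i"] assms(1,2) a'(1,3) unfolding a'_def by simp
  moreover have "dH b' b \<le> enat r"
    using dH_pivot[of b "Suc i"] assms(1,3) a'(1) b'(2) dH_commute unfolding b'_def by simp
  ultimately have "dH a a' + dH a' b' + dH b' b \<le> enat r + enat (2 * r + m) + enat r"
    using a'b' by (intro add_mono) auto
  moreover have "dH a b \<le> dH a a' + dH a' b' + dH b' b"
    by (rule wdist_triangle3)
  ultimately show ?thesis
    by simp
qed

definition stretch_bound :: "nat \<Rightarrow> nat \<Rightarrow> nat \<Rightarrow> bool" where
  "stretch_bound i L e \<longleftrightarrow> (\<forall>x\<in>V. \<forall>y\<in>V. dG x y \<le> enat L \<longrightarrow>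
     dH x y \<le> dG x y + enat e \<or> setdist V E x (A (Suc i)) \<le> enat (4 * L))"

lemma stretch_bound_0: "0 < l \<Longrightarrow> stretch_bound 0 1 0"
  unfolding stretch_bound_def
proof (intro ballI impI disjCI)
  fix x y
  assume "0 < l" "x \<in> V" "y \<in> V" and close: "dG x y \<le> enat 1"
    and far: "\<not> setdist V E x (A (Suc 0)) \<le> enat (4 * 1)"
  have "dG x y < enat 4"
    using close by (rule le_less_trans) simp
  also have "enat 4 < setdist V E x (A (Suc 0))"
    using far by simp
  finally have "dH x y \<le> dG x y"
    using dH_bunch[of 0 x y] \<open>0 < l\<close> \<open>x \<in> V\<close> \<open>y \<in> V\<close> A_0 by simp
  then show "dH x y \<le> dG x y + enat 0"
    by (simp add: zero_enat_def[symmetric])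
qed

lemma stretch_bound_failure:
  assumes "stretch_bound i L e" "u \<in> V" "v \<in> V" "dG u v \<le> enat d" "d \<le> L"
    and "\<not> dH u v \<le> enat (d + e)"
  shows "setdist V E u (A (Suc i)) \<le> enat (4 * L)" "setdist V E v (A (Suc i)) \<le> enat (4 * L)"
proof -
  have close: "dG u v \<le> enat L"
    using assms(4,5) by (simp add: order_trans)
  have stretched: "\<not> dH u v \<le> dG u v + enat e"
    using assms(4,6) add_right_mono[OF assms(4), of "enat e"] by (auto dest: order_trans)
  have sym: "dG v u = dG u v" "dH v u = dH u v"
    using dH_commute gdist_commute[OF sym_E] by simp_all
  have "dH u v \<le> dG u v + enat e \<or> setdist V E u (A (Suc i)) \<le> enat (4 * L)"
    "dH v u \<le> dG v u + enat e \<or> setdist V E v (A (Suc i)) \<le> enat (4 * L)"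
    using assms(1)[unfolded stretch_bound_def, rule_format, of u v]
      assms(1)[unfolded stretch_bound_def, rule_format, of v u] assms(2,3) close sym(1) by simp_all
  then show "setdist V E u (A (Suc i)) \<le> enat (4 * L)" "setdist V E v (A (Suc i)) \<le> enat (4 * L)"
    using stretched sym by simp_all
qed

lemma stretch_along_milestones:
  assumes "4 \<le> D" "Suc i < l" "stretch_bound i L e"
    and s: "\<And>k. s k \<in> V" and q: "mono q" "q D - q 0 \<le> D * L" "\<And>k. q (Suc k) - q k \<le> L"
    and dG_s: "\<And>j k. j \<le> k \<Longrightarrow> dG (s j) (s k) \<le> enat (q k - q j)"
    and far: "\<not> setdist V E (s 0) (A (Suc (Suc i))) \<le> enat (4 * (D * L))"
  shows "dH (s 0) (s D) \<le> enat (q D - q 0 + D * e + 16 * L)"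
proof (rule wdist_chain_bridged[OF q(1)])
  define good where "good t \<longleftrightarrow> dH (s t) (s (Suc t)) \<le> enat (q (Suc t) - q t + e)" for t
  show "dH (s t) (s (Suc t)) \<le> enat (q (Suc t) - q t + e)" if "good t" for t
    using that unfolding good_def .
  have near: "setdist V E (s t) (A (Suc i)) \<le> enat (4 * L)"
    "setdist V E (s (Suc t)) (A (Suc i)) \<le> enat (4 * L)" if "\<not> good t" for t
  proof -
    have "dG (s t) (s (Suc t)) \<le> enat (q (Suc t) - q t)"
      using dG_s by simp
    from stretch_bound_failure[OF assms(3) s s this q(3)] that
    show "setdist V E (s t) (A (Suc i)) \<le> enat (4 * L)"
      "setdist V E (s (Suc t)) (A (Suc i)) \<le> enat (4 * L)"
      unfolding good_def by blast+
  qed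
  fix j k
  assume jk: "j \<le> k" "k < D" "\<not> good j" "\<not> good k"
  have "4 * L \<le> D * L"
    using assms(1) by (rule mult_le_mono1)
  then have "q j - q 0 + (3 * (4 * L) + (q (Suc k) - q j)) \<le> 4 * (D * L)"
    using monoD[OF q(1), of 0 j] monoD[OF q(1), of j "Suc k"] monoD[OF q(1), of "Suc k" D] jk q(2)
    by linarith
  then have "enat (q j - q 0 + (3 * (4 * L) + (q (Suc k) - q j))) \<le> enat (4 * (D * L))"
    by (simp only: enat_ord_simps)
  also have "\<dots> < setdist V E (s 0) (A (Suc (Suc i)))"
    using far by (simp only: not_le)
  finally have "enat (q j - q 0 + (3 * (4 * L) + (q (Suc k) - q j)))
      < setdist V E (s 0) (A (Suc (Suc i)))" .
  with dG_s[of 0 j]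
  have "enat (3 * (4 * L) + (q (Suc k) - q j)) < setdist V E (s j) (A (Suc (Suc i)))"
    by (rule setdist_gt_near) simp
  moreover have "dG (s j) (s (Suc k)) \<le> enat (q (Suc k) - q j)"
    using dG_s jk(1) by simp
  ultimately have "dH (s j) (s (Suc k)) \<le> enat (4 * (4 * L) + (q (Suc k) - q j))"
    using pivot_detour[OF assms(2) s s near(1)[OF jk(3)] near(2)[OF jk(4)]] by blast
  then show "dH (s j) (s (Suc k)) \<le> enat (q (Suc k) - q j + 16 * L)"
    by (simp add: add.commute)
qed

lemma stretch_bound_Suc:
  assumes "4 \<le> D" "Suc i < l" "stretch_bound i L e"
  shows "stretch_bound (Suc i) (D * L) (D * e + 16 * L)"
  unfolding stretch_bound_def
proof (intro ballI impI disjCI)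
  fix x y
  assume "x \<in> V" "y \<in> V" "dG x y \<le> enat (D * L)"
    and far: "\<not> setdist V E x (A (Suc (Suc i))) \<le> enat (4 * (D * L))"
  then obtain n where n: "dG x y = enat n" "n \<le> D * L"
    by (cases "dG x y") auto
  then obtain s q where s: "s 0 = x" "s D = y" "\<And>k. s k \<in> V"
    and q: "mono q" "q 0 = 0" "q D = n" "\<And>k. q (Suc k) - q k \<le> L"
    and dG_s: "\<And>j k. j \<le> k \<Longrightarrow> dG (s j) (s k) \<le> enat (q k - q j)"
    using shortest_walk_milestones[OF n] by blast
  have "q D - q 0 \<le> D * L" "\<not> setdist V E (s 0) (A (Suc (Suc i))) \<le> enat (4 * (D * L))"
    using q n far s(1) by simp_all
  then have "dH (s 0) (s D) \<le> enat (q D - q 0 + D * e + 16 * L)"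
    using stretch_along_milestones[OF assms, where s = s and q = q] s(3) q(1,4) dG_s by blast
  then show "dH x y \<le> dG x y + enat (D * e + 16 * L)"
    using s q n by (simp add: add.assoc)
qed

lemma stretch_bound_pow:
  assumes "4 \<le> D"
  shows "i < l \<Longrightarrow> stretch_bound i (D ^ i) (16 * i * D ^ (i - 1))"
proof (induction i)
  case 0
  then show ?case
    using stretch_bound_0 by simp
next
  case (Suc i)
  then have "stretch_bound (Suc i) (D * D ^ i) (D * (16 * i * D ^ (i - 1)) + 16 * D ^ i)"
    using assms by (intro stretch_bound_Suc) auto
  moreover have "D * (16 * i * D ^ (i - 1)) + 16 * D ^ i = 16 * Suc i * D ^ i"
    by (cases i) (simp_all add: algebra_simps)
  ultimately show ?case
    by simp
qed

end

lemma ereal_of_enat_le_ereal_iff: "ereal_of_enat a \<le> ereal (real n) \<longleftrightarrow> a \<le> enat n"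
  by (metis ereal_of_enat_le_iff ereal_of_enat_simps(1))

theorem lemma3p1:
  shows "\<exists>c c' :: real. c > 0 \<and> c' > 0 \<and>
    (\<forall>(V :: nat set) (E :: (nat \<times> nat) set) (l :: nat) (A :: nat \<Rightarrow> nat set)
       (p :: nat \<Rightarrow> nat \<Rightarrow> nat) (\<epsilon> :: real).
      finite V \<and> E \<subseteq> V \<times> V \<and> sym E \<and> l \<ge> 1 \<and>
      A 0 = V \<and> (\<forall>j<l. A (Suc j) \<subseteq> A j) \<and> A l = {} \<and>
      is_pivot V E A l p \<and>
      0 < \<epsilon> \<and> \<epsilon> < 1/6 \<and> (\<exists>k::nat. 1/\<epsilon> = real k)
      \<longrightarrow>
      (\<forall>i<l. \<forall>x\<in>V. \<forall>y\<in>V.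
         ereal_of_enat (gdist V E x y) \<le> ereal ((1/\<epsilon>) ^ i) \<longrightarrow>
         (ereal_of_enat (wdist (TZ_edges V E A l p) (gdist V E) x y)
             \<le> ereal_of_enat (gdist V E x y) + ereal (c * real i * (1/\<epsilon>) ^ (i - 1))
          \<or> ereal_of_enat (setdist V E x (A (Suc i))) \<le> ereal (c' * (1/\<epsilon>) ^ i))))"
proof (rule exI[of _ 16], rule exI[of _ 4], intro conjI allI impI ballI)
  fix V E l A p i x y and \<epsilon> :: real
  assume H: "finite V \<and> E \<subseteq> V \<times> V \<and> sym E \<and> l \<ge> 1 \<and>
      A 0 = V \<and> (\<forall>j<l. A (Suc j) \<subseteq> A j) \<and> A l = {} \<and> is_pivot V E A l p \<and>
      0 < \<epsilon> \<and> \<epsilon> < 1/6 \<and> (\<exists>k::nat. 1/\<epsilon> = real k)"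
    and "i < l" "x \<in> V" "y \<in> V" and close: "ereal_of_enat (gdist V E x y) \<le> ereal ((1/\<epsilon>) ^ i)"
  then interpret thorup_zwick V E l A p
    by unfold_locales auto
  obtain D :: nat where D: "1/\<epsilon> = real D"
    using H by blast
  have "6 < 1/\<epsilon>"
    using H by (simp add: field_simps)
  then have "4 \<le> D"
    using D by simp
  moreover have "dG x y \<le> enat (D ^ i)"
    using close by (simp add: D ereal_of_enat_le_ereal_iff flip: of_nat_power)
  ultimately have "dH x y \<le> dG x y + enat (16 * i * D ^ (i - 1))
      \<or> setdist V E x (A (Suc i)) \<le> enat (4 * D ^ i)"
    using stretch_bound_pow[of D i] \<open>i < l\<close> \<open>x \<in> V\<close> \<open>y \<in> V\<close> unfolding stretch_bound_def by blast
  then show "ereal_of_enat (dH x y) \<le> ereal_of_enat (dG x y) + ereal (16 * real i * (1/\<epsilon>) ^ (i - 1))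
      \<or> ereal_of_enat (setdist V E x (A (Suc i))) \<le> ereal (4 * (1/\<epsilon>) ^ i)"
    by (auto simp: D ereal_of_enat_add ereal_of_enat_le_ereal_iff simp flip: of_nat_power
        dest: ereal_of_enat_le_iff[THEN iffD2])
qed simp_all

end
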